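(* Let $R$ be a commutative semiring, $v:R\to M$ a surjective m-valuation with support $\mathfrak q:=v^{-1}(0)$, and $U^0(v)$ the supertropical monoid constructed below. (i) The map $\varphi_v^0:R\to U^0(v)$ with $\varphi_v^0(a)=a$ for $a\in R\setminus\mathfrak q$ and $\varphi_v^0(a)=0_M$ for $a\in\mathfrak q$ is a surjective m-supervaluation covering $v$. (ii) $\varphi_v^0$ dominates every other m-supervaluation covering $v$.
   Context: A bipotent semiring $M$ is a commutative monoid with absorbing $0$ and a total order compatible with multiplication with $0$ least; $x+y=\max(x,y)$. An m-valuation on a semiring $R$ is a multiplicative map $v:R\to M$ to a bipotent semiring with $v(0)=0$, $v(1)=1$, $v(a+b)\le\max(v(a),v(b))$. A supertropical monoid is a commutative monoid $U$ with absorbing $0$ and idempotent $e$ with $ex=0\Rightarrow x=0$ and a total order on $eU$ making it a bipotent semiring. An m-supervaluation is a map $\varphi:R\to U$ to a supertropical monoid with $\varphi(0)=0$, $\varphi(1)=1$, $\varphi(ab)=\varphi(a)\varphi(b)$, $e\varphi(a+b)\le\max(e\varphi(a),e\varphi(b))$; it covers $v$ if $eU=M$ and $e\varphi=v$; it is surjective if $U=\varphi(R)\cup e\varphi(R)$. For m-supervaluations $\varphi:R\to U$, $\psi:R\to V$, $\varphi$ dominates $\psi$ if for all $a,b\in R$: $\varphi(a)=\varphi(b)\Rightarrow\psi(a)=\psi(b)$; $e\varphi(a)\le e\varphi(b)\Rightarrow e\psi(a)\le e\psi(b)$; $\varphi(a)\in eU\Rightarrow\psi(a)\in eV$. Construction: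 $U^0(v)$ is the disjoint union $(R\setminus\mathfrak q)\sqcup M$ with multiplication $x\odot y=xy$ (product in $R$) if $x,y,xy\in R\setminus\mathfrak q$; $x\odot y=0_M$ if $x,y\in R\setminus\mathfrak q$, $xy\in\mathfrak q$; $x\odot y=v(x)y$ if $x\in R\setminus\mathfrak q$, $y\in M$ (and symmetrically); $x\odot y=xy$ (product in $M$) if $x,y\in M$; unit $1_R$, absorbing element $0_M$, distinguished idempotent $e:=1_M$, with the given ordering on $eU^0(v)=M$. *)

theory Defs
  imports "HOL-Algebra.Group"
begin

text \<open>Addition is x + y = max x y and is not
needed explicitly.\<close>

definition bipotent_semiring :: "'m::{comm_monoid_mult,zero,linorder} itself \<Rightarrow> bool" where
  "bipotent_semiring _ \<longleftrightarrow>
     (\<forall>x::'m. 0 * x = 0 \<and> x * 0 = 0 \<and> 0 \<le> x) \<and>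
     (\<forall>x y z::'m. x \<le> y \<longrightarrow> x * z \<le> y * z)"

definition m_valuation :: "('r::comm_semiring_1 \<Rightarrow> 'm::{comm_monoid_mult,zero,linorder}) \<Rightarrow> bool" where
  "m_valuation v \<longleftrightarrow>
     v 0 = 0 \<and> v 1 = 1 \<and> (\<forall>a b. v (a * b) = v a * v b) \<and>
     (\<forall>a b. v (a + b) \<le> max (v a) (v b))"

record 'a st_monoid = "'a monoid" +
  st_zero :: 'a
  st_e :: 'a
  st_le :: "'a \<Rightarrow> 'a \<Rightarrow> bool"

definition ghost :: "('a, 'b) st_monoid_scheme \<Rightarrow> 'a set" where
  "ghost U = (\<lambda>x. st_e U \<otimes>\<^bsub>U\<^esub> x) ` carrier U"

definition st_max :: "('a, 'b) st_monoid_scheme \<Rightarrow> 'a \<Rightarrow> 'a \<Rightarrow> 'a" where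
  "st_max U x y = (if st_le U x y then y else x)"

definition supertropical_monoid :: "('a, 'b) st_monoid_scheme \<Rightarrow> bool" where
  "supertropical_monoid U \<longleftrightarrow>
     comm_monoid U \<and>
     st_zero U \<in> carrier U \<and>
     (\<forall>x\<in>carrier U. st_zero U \<otimes>\<^bsub>U\<^esub> x = st_zero U) \<and>
     st_e U \<in> carrier U \<and> st_e U \<otimes>\<^bsub>U\<^esub> st_e U = st_e U \<and>
     (\<forall>x\<in>carrier U. st_e U \<otimes>\<^bsub>U\<^esub> x = st_zero U \<longrightarrow> x = st_zero U) \<and>
     \<comment> \<open>total order on eU making eU a bipotent semiring\<close>
     (\<forall>x\<in>ghost U. st_le U x x) \<and>
     (\<forall>x\<in>ghost U. \<forall>y\<in>ghost U. st_le U x y \<and> st_le U y x \<longrightarrow> x = y) \<and>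
     (\<forall>x\<in>ghost U. \<forall>y\<in>ghost U. \<forall>z\<in>ghost U. st_le U x y \<and> st_le U y z \<longrightarrow> st_le U x z) \<and>
     (\<forall>x\<in>ghost U. \<forall>y\<in>ghost U. st_le U x y \<or> st_le U y x) \<and>
     (\<forall>x\<in>ghost U. \<forall>y\<in>ghost U. \<forall>z\<in>ghost U.
        st_le U x y \<longrightarrow> st_le U (x \<otimes>\<^bsub>U\<^esub> z) (y \<otimes>\<^bsub>U\<^esub> z)) \<and>
     (\<forall>x\<in>ghost U. st_le U (st_zero U) x)"

definition m_supervaluation ::
  "('a, 'b) st_monoid_scheme \<Rightarrow> ('r::comm_semiring_1 \<Rightarrow> 'a) \<Rightarrow> bool" where
  "m_supervaluation U \<phi> \<longleftrightarrow>
     supertropical_monoid U \<and>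
     (\<forall>a. \<phi> a \<in> carrier U) \<and>
     \<phi> 0 = st_zero U \<and> \<phi> 1 = \<one>\<^bsub>U\<^esub> \<and>
     (\<forall>a b. \<phi> (a * b) = \<phi> a \<otimes>\<^bsub>U\<^esub> \<phi> b) \<and>
     (\<forall>a b. st_le U (st_e U \<otimes>\<^bsub>U\<^esub> \<phi> (a + b))
                  (st_max U (st_e U \<otimes>\<^bsub>U\<^esub> \<phi> a) (st_e U \<otimes>\<^bsub>U\<^esub> \<phi> b)))"

text \<open>Since M is a type, the identification of M with eU is given
by an explicit isomorphism j : M -> eU of bipotent semirings (bijective onto eU,
multiplicative, 1 to e, 0 to 0, order preserving and reflecting), and e phi = j o v.\<close>

definition covers ::
  "('a, 'b) st_monoid_scheme \<Rightarrow> ('r::comm_semiring_1 \<Rightarrow> 'a) \<Rightarrow> ('m \<Rightarrow> 'a)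
     \<Rightarrow> ('r \<Rightarrow> 'm::{comm_monoid_mult,zero,linorder}) \<Rightarrow> bool" where
  "covers U \<phi> j v \<longleftrightarrow>
     bij_betw j UNIV (ghost U) \<and>
     (\<forall>x y. j (x * y) = j x \<otimes>\<^bsub>U\<^esub> j y) \<and>
     j 1 = st_e U \<and> j 0 = st_zero U \<and>
     (\<forall>x y. x \<le> y \<longleftrightarrow> st_le U (j x) (j y)) \<and>
     (\<forall>a. st_e U \<otimes>\<^bsub>U\<^esub> \<phi> a = j (v a))"

definition surjective_sv :: "('a, 'b) st_monoid_scheme \<Rightarrow> ('r \<Rightarrow> 'a) \<Rightarrow> bool" where
  "surjective_sv U \<phi> \<longleftrightarrow>
     carrier U = range \<phi> \<union> range (\<lambda>a. st_e U \<otimes>\<^bsub>U\<^esub> \<phi> a)"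

definition dominates ::
  "('a, 'b) st_monoid_scheme \<Rightarrow> ('r \<Rightarrow> 'a) \<Rightarrow> ('c, 'd) st_monoid_scheme \<Rightarrow> ('r \<Rightarrow> 'c) \<Rightarrow> bool" where
  "dominates U \<phi> V \<psi> \<longleftrightarrow>
     (\<forall>a b. \<phi> a = \<phi> b \<longrightarrow> \<psi> a = \<psi> b) \<and>
     (\<forall>a b. st_le U (st_e U \<otimes>\<^bsub>U\<^esub> \<phi> a) (st_e U \<otimes>\<^bsub>U\<^esub> \<phi> b) \<longrightarrow>
            st_le V (st_e V \<otimes>\<^bsub>V\<^esub> \<psi> a) (st_e V \<otimes>\<^bsub>V\<^esub> \<psi> b)) \<and>
     (\<forall>a. \<phi> a \<in> ghost U \<longrightarrow> \<psi> a \<in> ghost V)"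

text \<open>Elements of R \ q are Inl a (v a ~= 0), elements of M are Inr m.\<close>

definition phi0 :: "('r::comm_semiring_1 \<Rightarrow> 'm::{comm_monoid_mult,zero,linorder}) \<Rightarrow> 'r \<Rightarrow> 'r + 'm" where
  "phi0 v a = (if v a = 0 then Inr 0 else Inl a)"

fun u0_mult :: "('r::comm_semiring_1 \<Rightarrow> 'm::{comm_monoid_mult,zero,linorder})
                  \<Rightarrow> 'r + 'm \<Rightarrow> 'r + 'm \<Rightarrow> 'r + 'm" where
  "u0_mult v (Inl a) (Inl b) = (if v (a * b) = 0 then Inr 0 else Inl (a * b))"
| "u0_mult v (Inl a) (Inr m) = Inr (v a * m)"
| "u0_mult v (Inr m) (Inl b) = Inr (m * v b)"
| "u0_mult v (Inr m) (Inr n) = Inr (m * n)"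

fun u0_le :: "'r + 'm::linorder \<Rightarrow> 'r + 'm \<Rightarrow> bool" where
  "u0_le (Inr m) (Inr n) = (m \<le> n)"
| "u0_le _ _ = False"

definition U0 :: "('r::comm_semiring_1 \<Rightarrow> 'm::{comm_monoid_mult,zero,linorder}) \<Rightarrow> ('r + 'm) st_monoid" where
  "U0 v = \<lparr> carrier = Inl ` {a. v a \<noteq> 0} \<union> range Inr,
            mult = u0_mult v,
            one = phi0 v 1,
            st_zero = Inr 0,
            st_e = Inr 1,
            st_le = u0_le \<rparr>"

end

theory Submission
  imports Defs
begin

text \<open>The ghost ideal of \<open>U\<^sup>0(v)\<close> is a copy of \<open>M\<close>, on which \<open>e\<phi>\<^sub>v\<^sup>0\<close> is \<open>v\<close> itself; everything
else lies in \<open>R \ \<frak>q\<close>, where \<open>\<phi>\<^sub>v\<^sup>0\<close> is the identity. So the values of \<open>\<phi>\<^sub>v\<^sup>0\<close> carry all the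
information about \<open>a \<in> R\<close> that a supervaluation covering \<open>v\<close> could record, except on the
support \<open>\<frak>q\<close>; and there every covering supervaluation \<open>\<psi>\<close> vanishes, since \<open>e\<psi>(a) = v(a) = 0\<close>
forces \<open>\<psi>(a) = 0\<close>. This is why \<open>\<phi>\<^sub>v\<^sup>0\<close> dominates all of them.\<close>

lemma U0_simps [simp]:
  "carrier (U0 v) = Inl ` {a. v a \<noteq> 0} \<union> range Inr"
  "mult (U0 v) = u0_mult v"
  "one (U0 v) = phi0 v 1"
  "st_zero (U0 v) = Inr 0"
  "st_e (U0 v) = Inr 1"
  "st_le (U0 v) = u0_le"
  by (simp_all add: U0_def)

lemma bipotent_semiring_zero_mult:
  assumes "bipotent_semiring TYPE('m::{comm_monoid_mult,zero,linorder})"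
  shows "0 * x = (0::'m)" and "x * 0 = (0::'m)"
  using assms unfolding bipotent_semiring_def by auto

lemma u0_mult_commute: "u0_mult v x y = u0_mult v y x"
  by (cases x; cases y) (auto simp: mult.commute)

lemma u0_mult_assoc:
  fixes v :: "'r::comm_semiring_1 \<Rightarrow> 'm::{comm_monoid_mult,zero,linorder}"
  assumes B: "bipotent_semiring TYPE('m)" and V: "m_valuation v"
  shows "u0_mult v (u0_mult v x y) z = u0_mult v x (u0_mult v y z)"
proof -
  note zero = bipotent_semiring_zero_mult[OF B]
  have vm: "\<And>a b. v (a * b) = v a * v b" using V unfolding m_valuation_def by auto
  show ?thesis
    by (cases x; cases y; cases z) (auto simp: vm zero mult.assoc[symmetric],
        (metis mult.assoc mult.commute zero(2))+)
qed

lemma ghost_U0: "ghost (U0 v) = range Inr"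
proof -
  have "Inr m \<in> ghost (U0 v)" for m
    unfolding ghost_def by (rule image_eqI[of _ _ "Inr m"]) simp_all
  then have "range Inr \<subseteq> ghost (U0 v)" by blast
  moreover have "ghost (U0 v) \<subseteq> range Inr"
    unfolding ghost_def by auto
  ultimately show ?thesis by blast
qed

lemma e_mult_phi0:
  assumes "bipotent_semiring TYPE('m::{comm_monoid_mult,zero,linorder})"
  shows "st_e (U0 v) \<otimes>\<^bsub>U0 v\<^esub> phi0 v a = Inr ((v :: 'r::comm_semiring_1 \<Rightarrow> 'm) a)"
  by (auto simp: phi0_def bipotent_semiring_zero_mult[OF assms])

lemma phi0_in_carrier: "phi0 v a \<in> carrier (U0 v)"
  by (auto simp: phi0_def)

lemma comm_monoid_U0:
  fixes v :: "'r::comm_semiring_1 \<Rightarrow> 'm::{comm_monoid_mult,zero,linorder}"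
  assumes B: "bipotent_semiring TYPE('m)" and V: "m_valuation v"
  shows "comm_monoid (U0 v)"
proof (rule comm_monoidI)
  fix x y assume "x \<in> carrier (U0 v)" "y \<in> carrier (U0 v)"
  then show "x \<otimes>\<^bsub>U0 v\<^esub> y \<in> carrier (U0 v)"
    by (cases x; cases y) auto
next
  show "\<one>\<^bsub>U0 v\<^esub> \<in> carrier (U0 v)" using phi0_in_carrier by simp
next
  fix x y z show "x \<otimes>\<^bsub>U0 v\<^esub> y \<otimes>\<^bsub>U0 v\<^esub> z = x \<otimes>\<^bsub>U0 v\<^esub> (y \<otimes>\<^bsub>U0 v\<^esub> z)"
    by (simp add: u0_mult_assoc[OF B V])
next
  fix x y show "x \<otimes>\<^bsub>U0 v\<^esub> y = y \<otimes>\<^bsub>U0 v\<^esub> x"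
    by (simp add: u0_mult_commute)
next
  fix x assume x: "x \<in> carrier (U0 v)"
  note zero = bipotent_semiring_zero_mult[OF B]
  have v1: "v 1 = 1" using V unfolding m_valuation_def by simp
  \<comment> \<open>If \<open>1 = 0\<close> in \<open>M\<close>, the unit \<open>\<phi>\<^sub>v\<^sup>0(1)\<close> is \<open>0\<^sub>M\<close>, which is harmless because then \<open>M = {0}\<close>.\<close>
  have trivial_M: "(1::'m) = 0 \<Longrightarrow> m = 0" for m :: 'm by (metis mult.right_neutral zero(2))
  show "\<one>\<^bsub>U0 v\<^esub> \<otimes>\<^bsub>U0 v\<^esub> x = x"
    using x by (cases x) (auto simp: phi0_def v1 zero dest: trivial_M)
qed

lemma supertropical_monoid_U0:
  fixes v :: "'r::comm_semiring_1 \<Rightarrow> 'm::{comm_monoid_mult,zero,linorder}"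
  assumes B: "bipotent_semiring TYPE('m)" and V: "m_valuation v"
  shows "supertropical_monoid (U0 v)"
  unfolding supertropical_monoid_def ghost_U0
  using comm_monoid_U0[OF B V] B unfolding bipotent_semiring_def by auto

lemma m_supervaluation_phi0:
  fixes v :: "'r::comm_semiring_1 \<Rightarrow> 'm::{comm_monoid_mult,zero,linorder}"
  assumes B: "bipotent_semiring TYPE('m)" and V: "m_valuation v"
  shows "m_supervaluation (U0 v) (phi0 v)"
  unfolding m_supervaluation_def
proof (intro conjI allI supertropical_monoid_U0[OF B V] phi0_in_carrier)
  have v0: "v 0 = 0" using V unfolding m_valuation_def by simp
  show "phi0 v 0 = st_zero (U0 v)" by (simp add: phi0_def v0)
  show "phi0 v 1 = \<one>\<^bsub>U0 v\<^esub>" by simp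
next
  fix a b
  have vm: "v (a * b) = v a * v b" using V unfolding m_valuation_def by simp
  show "phi0 v (a * b) = phi0 v a \<otimes>\<^bsub>U0 v\<^esub> phi0 v b"
    by (auto simp: phi0_def vm bipotent_semiring_zero_mult[OF B])
next
  fix a b
  have "v (a + b) \<le> max (v a) (v b)" using V unfolding m_valuation_def by simp
  then show "st_le (U0 v) (st_e (U0 v) \<otimes>\<^bsub>U0 v\<^esub> phi0 v (a + b))
      (st_max (U0 v) (st_e (U0 v) \<otimes>\<^bsub>U0 v\<^esub> phi0 v a) (st_e (U0 v) \<otimes>\<^bsub>U0 v\<^esub> phi0 v b))"
    unfolding e_mult_phi0[OF B] by (auto simp: st_max_def max_def)
qed

lemma surjective_sv_phi0:
  fixes v :: "'r::comm_semiring_1 \<Rightarrow> 'm::{comm_monoid_mult,zero,linorder}"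
  assumes B: "bipotent_semiring TYPE('m)" and "surj v"
  shows "surjective_sv (U0 v) (phi0 v)"
proof -
  have "range (\<lambda>a. st_e (U0 v) \<otimes>\<^bsub>U0 v\<^esub> phi0 v a) = range Inr"
    unfolding e_mult_phi0[OF B] using \<open>surj v\<close> by (metis image_image)
  moreover have "Inl ` {a. v a \<noteq> 0} \<subseteq> range (phi0 v)"
    by (auto simp: phi0_def intro!: range_eqI)
  moreover have "range (phi0 v) \<subseteq> carrier (U0 v)"
    using phi0_in_carrier by blast
  ultimately show ?thesis
    unfolding surjective_sv_def by auto
qed

lemma covers_phi0:
  fixes v :: "'r::comm_semiring_1 \<Rightarrow> 'm::{comm_monoid_mult,zero,linorder}"
  assumes "bipotent_semiring TYPE('m)"
  shows "covers (U0 v) (phi0 v) Inr v"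
  unfolding covers_def ghost_U0 e_mult_phi0[OF assms] by (simp add: bij_betw_def)

lemma covering_supervaluation_vanishes_on_support:
  assumes "m_supervaluation V \<psi>" and "covers V \<psi> j v" and "v a = 0"
  shows "\<psi> a = st_zero V"
proof -
  have "st_e V \<otimes>\<^bsub>V\<^esub> \<psi> a = st_zero V"
    using assms(2,3) unfolding covers_def by metis
  moreover have "\<psi> a \<in> carrier V" and "supertropical_monoid V"
    using assms(1) unfolding m_supervaluation_def by auto
  ultimately show ?thesis
    unfolding supertropical_monoid_def by blast
qed

lemma phi0_dominates_covering:
  fixes v :: "'r::comm_semiring_1 \<Rightarrow> 'm::{comm_monoid_mult,zero,linorder}"
  assumes B: "bipotent_semiring TYPE('m)"
    and sv: "m_supervaluation V \<psi>" and cov: "covers V \<psi> j v"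
  shows "dominates (U0 v) (phi0 v) V \<psi>"
  unfolding dominates_def
proof (intro conjI allI impI)
  note vanish = covering_supervaluation_vanishes_on_support[OF sv cov]
  fix a b assume "phi0 v a = phi0 v b"
  then show "\<psi> a = \<psi> b" using vanish by (auto simp: phi0_def split: if_splits)
next
  fix a b
  assume "st_le (U0 v) (st_e (U0 v) \<otimes>\<^bsub>U0 v\<^esub> phi0 v a) (st_e (U0 v) \<otimes>\<^bsub>U0 v\<^esub> phi0 v b)"
  then have "v a \<le> v b" unfolding e_mult_phi0[OF B] by simp
  then show "st_le V (st_e V \<otimes>\<^bsub>V\<^esub> \<psi> a) (st_e V \<otimes>\<^bsub>V\<^esub> \<psi> b)"
    using cov unfolding covers_def by simp
next
  fix a assume "phi0 v a \<in> ghost (U0 v)"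
  then have "\<psi> a = st_zero V"
    by (intro covering_supervaluation_vanishes_on_support[OF sv cov])
       (auto simp: ghost_U0 phi0_def split: if_splits)
  moreover have "st_zero V \<in> ghost V"
    using cov bij_betw_apply[of j UNIV "ghost V" 0] unfolding covers_def by auto
  ultimately show "\<psi> a \<in> ghost V" by simp
qed

theorem theorem6p4:
  fixes v :: "'r::comm_semiring_1 \<Rightarrow> 'm::{comm_monoid_mult,zero,linorder}"
  assumes "bipotent_semiring TYPE('m)"
    and "m_valuation v"
    and "surj v"
  shows "m_supervaluation (U0 v) (phi0 v) \<and> surjective_sv (U0 v) (phi0 v)
           \<and> covers (U0 v) (phi0 v) Inr v
         \<and> (\<forall>(V :: 'v st_monoid) (\<psi> :: 'r \<Rightarrow> 'v) (j :: 'm \<Rightarrow> 'v).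
              m_supervaluation V \<psi> \<and> covers V \<psi> j v \<longrightarrow>
              dominates (U0 v) (phi0 v) V \<psi>)"
  using m_supervaluation_phi0[OF assms(1,2)] surjective_sv_phi0[OF assms(1,3)]
    covers_phi0[OF assms(1)] phi0_dominates_covering[OF assms(1)]
  by blast

end
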